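(* Let $M$ be a $2^n\times2^n$ Hermitian matrix, let $k\le n$, and let $\varphi$ be a $2^k\times2^k$ density operator. Let $M_\varphi=\mathrm{Tr}_{n-k+1,\dots,n}\big[(I\otimes\varphi)M\big]$. Then for every $\varepsilon\in[0,1]$, $\deg_\varepsilon(M_\varphi)\le\deg_\varepsilon(M)$.
   Context: Pauli degree: with $P_\sigma=\bigotimes_iP_{\sigma_i}$, $P_0=I,P_1=X,P_2=Y,P_3=Z$, every $2^m\times2^m$ matrix is $A=\sum_\sigma\hat A(\sigma)P_\sigma$, $\deg(A)=\max\{|\{i:\sigma_i\ne0\}|:\hat A(\sigma)\ne0\}$, and $\deg_\varepsilon(A)=\min\{\deg(B):\|A-B\|\le\varepsilon\}$ with $\|\cdot\|$ the spectral norm. $\mathrm{Tr}_{n-k+1,\dots,n}$ is the partial trace over the last $k$ qubits. *)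

theory Defs
  imports Complex_Main "Jordan_Normal_Form.Matrix"
begin

definition kron :: "complex mat \<Rightarrow> complex mat \<Rightarrow> complex mat" where
  "kron A B = mat (dim_row A * dim_row B) (dim_col A * dim_col B)
     (\<lambda>(i,j). A $$ (i div dim_row B, j div dim_col B) * B $$ (i mod dim_row B, j mod dim_col B))"

(* single-qubit Pauli matrices: P0 = I, P1 = X, P2 = Y, P3 = Z *)
definition pauli :: "nat \<Rightarrow> complex mat" where
  "pauli s = (if s = 0 then mat_of_rows_list 2 [[1,0],[0,1]]
     else if s = 1 then mat_of_rows_list 2 [[0,1],[1,0]]
     else if s = 2 then mat_of_rows_list 2 [[0,-\<i>],[\<i>,0]]
     else mat_of_rows_list 2 [[1,0],[0,-1]])"

(* Pauli strings on m qubits: lists sigma of length m with entries in {0,1,2,3};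
   qubit 1 is the leftmost tensor factor, qubit m the rightmost *)
definition pauli_strings :: "nat \<Rightarrow> nat list set" where
  "pauli_strings m = {\<sigma>. length \<sigma> = m \<and> set \<sigma> \<subseteq> {0..<4}}"

definition pauli_op :: "nat list \<Rightarrow> complex mat" where
  "pauli_op \<sigma> = foldl (\<lambda>A s. kron A (pauli s)) (1\<^sub>m 1) \<sigma>"

definition weight :: "nat list \<Rightarrow> nat" where
  "weight \<sigma> = length (filter (\<lambda>s. s \<noteq> 0) \<sigma>)"

definition pauli_expansion :: "nat \<Rightarrow> complex mat \<Rightarrow> (nat list \<Rightarrow> complex) \<Rightarrow> bool" where
  "pauli_expansion m A c \<longleftrightarrow>
     A = mat (2^m) (2^m) (\<lambda>(i,j). \<Sum>\<sigma>\<in>pauli_strings m. c \<sigma> * pauli_op \<sigma> $$ (i,j))"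

definition pauli_deg :: "nat \<Rightarrow> complex mat \<Rightarrow> nat" where
  "pauli_deg m A = (LEAST d. \<exists>c. pauli_expansion m A c \<and>
      (\<forall>\<sigma>\<in>pauli_strings m. c \<sigma> \<noteq> 0 \<longrightarrow> weight \<sigma> \<le> d))"

definition vnorm :: "complex vec \<Rightarrow> real" where
  "vnorm v = sqrt (\<Sum>i<dim_vec v. (cmod (v $ i))\<^sup>2)"

definition spec_norm :: "complex mat \<Rightarrow> real" where
  "spec_norm A = Sup {vnorm (A *\<^sub>v v) | v. v \<in> carrier_vec (dim_col A) \<and> vnorm v \<le> 1}"

definition approx_deg :: "nat \<Rightarrow> real \<Rightarrow> complex mat \<Rightarrow> nat" where
  "approx_deg m \<epsilon> A = (LEAST d. \<exists>B \<in> carrier_mat (2^m) (2^m).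
      spec_norm (A - B) \<le> \<epsilon> \<and> pauli_deg m B = d)"

definition hermitian :: "complex mat \<Rightarrow> bool" where
  "hermitian A \<longleftrightarrow> dim_row A = dim_col A \<and>
     (\<forall>i<dim_row A. \<forall>j<dim_col A. A $$ (i,j) = cnj (A $$ (j,i)))"

definition density_op :: "nat \<Rightarrow> complex mat \<Rightarrow> bool" where
  "density_op k \<phi> \<longleftrightarrow> \<phi> \<in> carrier_mat (2^k) (2^k) \<and> hermitian \<phi> \<and>
     (\<forall>v \<in> carrier_vec (2^k). 0 \<le> Re (\<Sum>i<2^k. cnj (v $ i) * (\<phi> *\<^sub>v v) $ i)) \<and>
     (\<Sum>i<2^k. \<phi> $$ (i,i)) = 1"

definition ptrace_last :: "nat \<Rightarrow> nat \<Rightarrow> complex mat \<Rightarrow> complex mat" where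
  "ptrace_last n k A = mat (2^(n-k)) (2^(n-k))
     (\<lambda>(a,a'). \<Sum>b<2^k. A $$ (a * 2^k + b, a' * 2^k + b))"

end

(* Write M_phi for the partial trace of (I (x) phi) M. On Pauli strings it acts by
   P_tau (x) P_rho |-> Tr(phi P_rho) P_tau, so it is linear and never increases the Pauli
   degree. It is also a contraction for the spectral norm: writing phi = sum_t r_t r_t^*
   with sum_t |r_t|^2 = Tr phi = 1, the a-th entry of M_phi u is the sum over t of the
   inner product of r_t with the a-th block of M (u (x) r_t), so
   |M_phi u| <= sum_t |r_t| |M| |u| |r_t| = |M| |u|. Hence an eps-approximation B of M of
   degree deg_eps(M) yields the eps-approximation B_phi of M_phi of no larger degree. *)

theory Submission
  imports Defs "HOL-Analysis.L2_Norm"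
begin

section \<open>Pauli strings and Pauli expansions\<close>

lemma block_index_less:
  fixes a c N K :: nat
  assumes "a < N" "c < K"
  shows "a * K + c < N * K"
proof -
  have "a * K + c < (a + 1) * K" using assms(2) by simp
  also have "\<dots> \<le> N * K" using assms(1) by (intro mult_right_mono) auto
  finally show ?thesis .
qed

lemma sum_lessThan_mult_blocks:
  fixes N K :: nat
  shows "(\<Sum>l<N * K. f l) = (\<Sum>a<N. \<Sum>c<K. f (a * K + c))"
proof -
  have "(\<Sum>l<N * K. f l) = (\<Sum>a<N. sum f {a * K..<a * K + K})"
    using sum.nat_group[of f K N] by simp
  also have "\<dots> = (\<Sum>a<N. \<Sum>c<K. f (a * K + c))"
  proof (rule sum.cong[OF refl])
    fix a
    show "sum f {a * K..<a * K + K} = (\<Sum>c<K. f (a * K + c))"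
      using sum.shift_bounds_nat_ivl[of f 0 "a * K" K] by (simp add: lessThan_atLeast0 add.commute)
  qed
  finally show ?thesis .
qed

lemma kron_dims [simp]:
  "dim_row (kron A B) = dim_row A * dim_row B"
  "dim_col (kron A B) = dim_col A * dim_col B"
  by (simp_all add: kron_def)

lemma kron_index:
  "i < dim_row A * dim_row B \<Longrightarrow> j < dim_col A * dim_col B \<Longrightarrow>
   kron A B $$ (i, j) = A $$ (i div dim_row B, j div dim_col B) * B $$ (i mod dim_row B, j mod dim_col B)"
  by (simp add: kron_def)

lemma mat_of_rows_list_dims [simp]:
  "dim_row (mat_of_rows_list nc rs) = length rs" "dim_col (mat_of_rows_list nc rs) = nc"
  by (simp_all add: mat_of_rows_list_def)

lemma mat_of_rows_list_index [simp]:
  "i < length rs \<Longrightarrow> j < nc \<Longrightarrow> mat_of_rows_list nc rs $$ (i, j) = rs ! i ! j"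
  by (simp add: mat_of_rows_list_def)

lemma pauli_carrier: "pauli s \<in> carrier_mat 2 2"
  unfolding pauli_def carrier_mat_def by simp

lemma pauli_op_snoc: "pauli_op (\<sigma> @ [s]) = kron (pauli_op \<sigma>) (pauli s)"
  by (simp add: pauli_op_def)

lemma pauli_op_carrier: "pauli_op \<sigma> \<in> carrier_mat (2 ^ length \<sigma>) (2 ^ length \<sigma>)"
proof (induction \<sigma> rule: rev_induct)
  case Nil
  then show ?case by (simp add: pauli_op_def)
next
  case (snoc s \<sigma>)
  have "dim_row (pauli s) = 2" "dim_col (pauli s) = 2"
    using pauli_carrier[of s] by auto
  moreover have "dim_row (pauli_op \<sigma>) = 2 ^ length \<sigma>" "dim_col (pauli_op \<sigma>) = 2 ^ length \<sigma>"
    using snoc.IH by auto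
  ultimately show ?case
    unfolding pauli_op_snoc by (intro carrier_matI) (simp_all only: kron_dims length_append_singleton power_Suc mult.commute)
qed

lemma pauli_op_dims [simp]:
  "dim_row (pauli_op \<sigma>) = 2 ^ length \<sigma>" "dim_col (pauli_op \<sigma>) = 2 ^ length \<sigma>"
  using pauli_op_carrier[of \<sigma>] by auto

lemma pauli_op_single: "x < 2 \<Longrightarrow> y < 2 \<Longrightarrow> pauli_op [s] $$ (x, y) = pauli s $$ (x, y)"
  using pauli_op_snoc[of "[]" s] pauli_carrier[of s] by (simp add: kron_index pauli_op_def)

lemma pauli_op_append_index:
  assumes "i < 2 ^ (length \<tau> + length \<rho>)" "j < 2 ^ (length \<tau> + length \<rho>)"
  shows "pauli_op (\<tau> @ \<rho>) $$ (i, j) =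
    pauli_op \<tau> $$ (i div 2 ^ length \<rho>, j div 2 ^ length \<rho>) * pauli_op \<rho> $$ (i mod 2 ^ length \<rho>, j mod 2 ^ length \<rho>)"
  using assms
proof (induction \<rho> arbitrary: i j rule: rev_induct)
  case Nil
  then show ?case by (simp add: pauli_op_def)
next
  case (snoc s \<rho>)
  let ?r = "length \<rho>"
  have p2: "dim_row (pauli s) = 2" "dim_col (pauli s) = 2"
    using pauli_carrier[of s] by auto
  have ij: "i < 2 ^ (length \<tau> + ?r) * 2" "j < 2 ^ (length \<tau> + ?r) * 2"
    using snoc.prems by (auto simp: power_add)
  have split_last: "pauli_op (\<tau> @ \<rho> @ [s]) $$ (i, j) =
      pauli_op (\<tau> @ \<rho>) $$ (i div 2, j div 2) * pauli s $$ (i mod 2, j mod 2)"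
    using ij by (simp add: pauli_op_snoc[of "\<tau> @ \<rho>", simplified] kron_index p2 power_add)
  have split_rest: "pauli_op (\<tau> @ \<rho>) $$ (i div 2, j div 2) =
      pauli_op \<tau> $$ (i div 2 div 2 ^ ?r, j div 2 div 2 ^ ?r) * pauli_op \<rho> $$ (i div 2 mod 2 ^ ?r, j div 2 mod 2 ^ ?r)"
    by (rule snoc.IH) (use ij in \<open>auto simp: less_mult_imp_div_less\<close>)
  have split_tail: "pauli_op (\<rho> @ [s]) $$ (x, y) =
      pauli_op \<rho> $$ (x div 2, y div 2) * pauli s $$ (x mod 2, y mod 2)"
    if "x < 2 ^ Suc ?r" "y < 2 ^ Suc ?r" for x y
    using that by (simp add: pauli_op_snoc kron_index p2 mult.commute)
  have digits: "x mod 2 ^ Suc ?r div 2 = x div 2 mod 2 ^ ?r" "x mod 2 ^ Suc ?r mod 2 = x mod 2"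
    "x div 2 div 2 ^ ?r = x div 2 ^ Suc ?r" for x :: nat
    by (simp add: mod_mult2_eq mult.commute, simp add: mod_mod_cancel, simp add: div_mult2_eq)
  have "pauli_op (\<rho> @ [s]) $$ (i mod 2 ^ Suc ?r, j mod 2 ^ Suc ?r) =
      pauli_op \<rho> $$ (i div 2 mod 2 ^ ?r, j div 2 mod 2 ^ ?r) * pauli s $$ (i mod 2, j mod 2)"
    using split_tail[of "i mod 2 ^ Suc ?r" "j mod 2 ^ Suc ?r"] by (simp only: digits mod_less_divisor zero_less_power pos2)
  then show ?case
    unfolding length_append_singleton split_last split_rest digits(3) by (simp only: mult.assoc)
qed

lemma finite_pauli_strings [simp]: "finite (pauli_strings m)"
proof -
  have "pauli_strings m = {xs. set xs \<subseteq> {0..<4} \<and> length xs = m}"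
    by (auto simp: pauli_strings_def)
  then show ?thesis using finite_lists_length_eq[of "{0..<4::nat}" m] by simp
qed

lemma pauli_strings_add:
  "pauli_strings (p + q) = (\<lambda>(\<tau>, \<rho>). \<tau> @ \<rho>) ` (pauli_strings p \<times> pauli_strings q)"
proof (intro Set.set_eqI iffI)
  fix \<sigma> assume \<sigma>: "\<sigma> \<in> pauli_strings (p + q)"
  have "take p \<sigma> \<in> pauli_strings p" "drop p \<sigma> \<in> pauli_strings q"
    using \<sigma> set_take_subset[of p \<sigma>] set_drop_subset[of p \<sigma>] by (auto simp: pauli_strings_def)
  then have "(take p \<sigma>, drop p \<sigma>) \<in> pauli_strings p \<times> pauli_strings q" by simp
  then show "\<sigma> \<in> (\<lambda>(\<tau>, \<rho>). \<tau> @ \<rho>) ` (pauli_strings p \<times> pauli_strings q)"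
    by (rule rev_image_eqI) simp
next
  fix \<sigma> assume "\<sigma> \<in> (\<lambda>(\<tau>, \<rho>). \<tau> @ \<rho>) ` (pauli_strings p \<times> pauli_strings q)"
  then show "\<sigma> \<in> pauli_strings (p + q)" by (auto simp: pauli_strings_def subset_iff)
qed

lemma sum_pauli_strings_add:
  "(\<Sum>\<sigma>\<in>pauli_strings (p + q). f \<sigma>) = (\<Sum>\<tau>\<in>pauli_strings p. \<Sum>\<rho>\<in>pauli_strings q. f (\<tau> @ \<rho>))"
proof -
  have "inj_on (\<lambda>(\<tau>, \<rho>). \<tau> @ \<rho>) (pauli_strings p \<times> pauli_strings q)"
    by (auto simp: inj_on_def pauli_strings_def)
  then have "(\<Sum>\<sigma>\<in>pauli_strings (p + q). f \<sigma>) = (\<Sum>(\<tau>, \<rho>)\<in>pauli_strings p \<times> pauli_strings q. f (\<tau> @ \<rho>))"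
    unfolding pauli_strings_add by (subst sum.reindex) (simp_all add: case_prod_unfold)
  then show ?thesis by (simp add: sum.cartesian_product)
qed

lemma sum_pauli_strings_one: "(\<Sum>\<rho>\<in>pauli_strings 1. f \<rho>) = (\<Sum>s<4. f [s])"
proof -
  have "pauli_strings 1 = (\<lambda>s. [s]) ` {..<4}"
    by (auto simp: pauli_strings_def image_iff length_Suc_conv)
  then show ?thesis by (simp add: sum.reindex inj_on_def)
qed

lemma pauli_completeness_one:
  assumes "x < 2" "y < 2" "x' < 2" "y' < 2"
  shows "(\<Sum>s<4. pauli s $$ (x, y) * cnj (pauli s $$ (x', y'))) = (if x = x' \<and> y = y' then 2 else 0)"
proof -
  have sum4: "(\<Sum>s<4. g s) = g 0 + g 1 + g 2 + g (3::nat)" for g :: "nat \<Rightarrow> complex"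
    by (simp add: eval_nat_numeral)
  have "x = 0 \<or> x = 1" "y = 0 \<or> y = 1" "x' = 0 \<or> x' = 1" "y' = 0 \<or> y' = 1"
    using assms by auto
  then show ?thesis
    by (auto simp: sum4 pauli_def)
qed

lemma pauli_completeness:
  assumes "i < 2 ^ m" "j < 2 ^ m" "i' < 2 ^ m" "j' < 2 ^ m"
  shows "(\<Sum>\<sigma>\<in>pauli_strings m. pauli_op \<sigma> $$ (i, j) * cnj (pauli_op \<sigma> $$ (i', j'))) =
    (if i = i' \<and> j = j' then 2 ^ m else 0)"
  using assms
proof (induction m arbitrary: i j i' j')
  case 0
  then have "i = 0" "j = 0" "i' = 0" "j' = 0" by auto
  moreover have "pauli_strings 0 = {[]}" by (auto simp: pauli_strings_def)
  ultimately show ?case by (simp add: pauli_op_def)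
next
  case (Suc m)
  have split_last: "pauli_op (\<tau> @ [s]) $$ (x, y) = pauli_op \<tau> $$ (x div 2, y div 2) * pauli s $$ (x mod 2, y mod 2)"
    if "\<tau> \<in> pauli_strings m" "x < 2 ^ Suc m" "y < 2 ^ Suc m" for \<tau> s x y
    using pauli_op_append_index[of x \<tau> "[s]" y] that by (simp add: pauli_strings_def pauli_op_single)
  have digit_eq: "x = y \<longleftrightarrow> x div 2 = y div 2 \<and> x mod 2 = y mod 2" for x y :: nat
    by (metis div_mult_mod_eq)
  have "(\<Sum>\<sigma>\<in>pauli_strings (Suc m). pauli_op \<sigma> $$ (i, j) * cnj (pauli_op \<sigma> $$ (i', j'))) =
      (\<Sum>\<tau>\<in>pauli_strings m. pauli_op \<tau> $$ (i div 2, j div 2) * cnj (pauli_op \<tau> $$ (i' div 2, j' div 2))) *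
      (\<Sum>s<4. pauli s $$ (i mod 2, j mod 2) * cnj (pauli s $$ (i' mod 2, j' mod 2)))"
    unfolding Suc_eq_plus1 sum_pauli_strings_add sum_pauli_strings_one sum_product
    using Suc.prems by (intro sum.cong refl) (simp add: split_last mult_ac)
  also have "\<dots> = (if i div 2 = i' div 2 \<and> j div 2 = j' div 2 then 2 ^ m else 0) *
      (if i mod 2 = i' mod 2 \<and> j mod 2 = j' mod 2 then 2 else 0)"
    using Suc.prems by (subst Suc.IH) (auto simp: less_mult_imp_div_less pauli_completeness_one)
  also have "\<dots> = (if i = i' \<and> j = j' then 2 ^ Suc m else 0)"
    unfolding digit_eq[of i] digit_eq[of j] by auto
  finally show ?case .
qed

lemma pauli_expansion_exists:
  assumes "A \<in> carrier_mat (2 ^ m) (2 ^ m)"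
  shows "\<exists>c. pauli_expansion m A c"
proof -
  let ?S = "pauli_strings m"
  define c where "c \<sigma> = (\<Sum>i'<2 ^ m. \<Sum>j'<2 ^ m. cnj (pauli_op \<sigma> $$ (i', j')) * A $$ (i', j')) / 2 ^ m" for \<sigma>
  have "A $$ (i, j) = (\<Sum>\<sigma>\<in>?S. c \<sigma> * pauli_op \<sigma> $$ (i, j))" if ij: "i < 2 ^ m" "j < 2 ^ m" for i j
  proof -
    have "(\<Sum>\<sigma>\<in>?S. c \<sigma> * pauli_op \<sigma> $$ (i, j)) =
        (\<Sum>\<sigma>\<in>?S. \<Sum>i'<2 ^ m. \<Sum>j'<2 ^ m. A $$ (i', j') / 2 ^ m * (pauli_op \<sigma> $$ (i, j) * cnj (pauli_op \<sigma> $$ (i', j'))))"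
      unfolding c_def sum_divide_distrib sum_distrib_right by (simp add: mult_ac)
    also have "\<dots> = (\<Sum>i'<2 ^ m. \<Sum>j'<2 ^ m. A $$ (i', j') / 2 ^ m *
        (\<Sum>\<sigma>\<in>?S. pauli_op \<sigma> $$ (i, j) * cnj (pauli_op \<sigma> $$ (i', j'))))"
      unfolding sum_distrib_left by (subst sum.swap) (simp add: sum.swap[of _ ?S])
    also have "\<dots> = (\<Sum>i'<2 ^ m. \<Sum>j'<2 ^ m. if i' = i \<and> j' = j then A $$ (i, j) else 0)"
      using ij by (intro sum.cong refl) (auto simp: pauli_completeness)
    also have "\<dots> = (\<Sum>i'<2 ^ m. if i' = i then \<Sum>j'<2 ^ m. if j' = j then A $$ (i, j) else 0 else 0)"
      by (intro sum.cong refl) auto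
    also have "\<dots> = A $$ (i, j)"
      using ij by simp
    finally show ?thesis by simp
  qed
  then have "A = mat (2 ^ m) (2 ^ m) (\<lambda>(i, j). \<Sum>\<sigma>\<in>?S. c \<sigma> * pauli_op \<sigma> $$ (i, j))"
    using assms by (intro eq_matI) auto
  then show ?thesis unfolding pauli_expansion_def by blast
qed

lemma pauli_expansion_index:
  "pauli_expansion m A c \<Longrightarrow> i < 2 ^ m \<Longrightarrow> j < 2 ^ m \<Longrightarrow>
   A $$ (i, j) = (\<Sum>\<sigma>\<in>pauli_strings m. c \<sigma> * pauli_op \<sigma> $$ (i, j))"
  unfolding pauli_expansion_def by simp

lemma pauli_expansion_carrier: "pauli_expansion m A c \<Longrightarrow> A \<in> carrier_mat (2 ^ m) (2 ^ m)"
  unfolding pauli_expansion_def by simp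

lemma pauli_deg_le:
  assumes "pauli_expansion m A c" "\<And>\<sigma>. \<sigma> \<in> pauli_strings m \<Longrightarrow> c \<sigma> \<noteq> 0 \<Longrightarrow> weight \<sigma> \<le> d"
  shows "pauli_deg m A \<le> d"
  unfolding pauli_deg_def by (rule Least_le) (use assms in blast)

lemma pauli_deg_attained:
  assumes "A \<in> carrier_mat (2 ^ m) (2 ^ m)"
  obtains c where "pauli_expansion m A c" "\<And>\<sigma>. \<sigma> \<in> pauli_strings m \<Longrightarrow> c \<sigma> \<noteq> 0 \<Longrightarrow> weight \<sigma> \<le> pauli_deg m A"
proof -
  obtain c where "pauli_expansion m A c"
    using pauli_expansion_exists[OF assms] by blast
  moreover have "weight \<sigma> \<le> m" if "\<sigma> \<in> pauli_strings m" for \<sigma>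
    using that length_filter_le[of "\<lambda>s. s \<noteq> 0" \<sigma>] by (simp add: weight_def pauli_strings_def)
  ultimately have "\<exists>c. pauli_expansion m A c \<and> (\<forall>\<sigma>\<in>pauli_strings m. c \<sigma> \<noteq> 0 \<longrightarrow> weight \<sigma> \<le> m)"
    by blast
  then have "\<exists>c. pauli_expansion m A c \<and> (\<forall>\<sigma>\<in>pauli_strings m. c \<sigma> \<noteq> 0 \<longrightarrow> weight \<sigma> \<le> pauli_deg m A)"
    unfolding pauli_deg_def by (rule LeastI)
  then show ?thesis using that by blast
qed

section \<open>Partial trace against a state\<close>

definition ptrace_weighted :: "nat \<Rightarrow> nat \<Rightarrow> complex mat \<Rightarrow> complex mat \<Rightarrow> complex mat" where
  "ptrace_weighted n k \<phi> A = ptrace_last n k (kron (1\<^sub>m (2 ^ (n - k))) \<phi> * A)"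

lemma ptrace_weighted_dims [simp]:
  "dim_row (ptrace_weighted n k \<phi> A) = 2 ^ (n - k)" "dim_col (ptrace_weighted n k \<phi> A) = 2 ^ (n - k)"
  by (simp_all add: ptrace_weighted_def ptrace_last_def)

lemma kron_one_mult_index:
  fixes N K :: nat
  assumes A: "A \<in> carrier_mat (N * K) C" and \<phi>: "\<phi> \<in> carrier_mat K K"
    and a: "a < N" and b: "b < K" and j: "j < C"
  shows "(kron (1\<^sub>m N) \<phi> * A) $$ (a * K + b, j) = (\<Sum>c<K. \<phi> $$ (b, c) * A $$ (a * K + c, j))"
proof -
  have row: "a * K + b < N * K"
    using a b by (rule block_index_less)
  have "(kron (1\<^sub>m N) \<phi> * A) $$ (a * K + b, j) = (\<Sum>l<N * K. kron (1\<^sub>m N) \<phi> $$ (a * K + b, l) * A $$ (l, j))"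
    using A \<phi> row j by (simp add: scalar_prod_def lessThan_atLeast0)
  also have "\<dots> = (\<Sum>x<N. \<Sum>c<K. kron (1\<^sub>m N) \<phi> $$ (a * K + b, x * K + c) * A $$ (x * K + c, j))"
    by (rule sum_lessThan_mult_blocks)
  also have "\<dots> = (\<Sum>x<N. \<Sum>c<K. if x = a then \<phi> $$ (b, c) * A $$ (x * K + c, j) else 0)"
    using \<phi> row a b by (intro sum.cong refl) (simp add: kron_index block_index_less)
  also have "\<dots> = (\<Sum>c<K. \<phi> $$ (b, c) * A $$ (a * K + c, j))"
    using a by (subst sum.swap) simp
  finally show ?thesis .
qed

lemma ptrace_weighted_index:
  assumes A: "A \<in> carrier_mat (2 ^ (p + k)) (2 ^ (p + k))" and \<phi>: "\<phi> \<in> carrier_mat (2 ^ k) (2 ^ k)"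
    and a: "a < 2 ^ p" "a' < 2 ^ p"
  shows "ptrace_weighted (p + k) k \<phi> A $$ (a, a') =
    (\<Sum>b<2 ^ k. \<Sum>c<2 ^ k. \<phi> $$ (b, c) * A $$ (a * 2 ^ k + c, a' * 2 ^ k + b))"
proof -
  have "A \<in> carrier_mat (2 ^ p * 2 ^ k) (2 ^ p * 2 ^ k)"
    using A by (simp add: power_add)
  then show ?thesis
    using \<phi> a block_index_less[OF a(2)]
    by (simp add: ptrace_weighted_def ptrace_last_def kron_one_mult_index)
qed

lemma ptrace_weighted_diff:
  assumes A: "A \<in> carrier_mat (2 ^ (p + k)) (2 ^ (p + k))" and B: "B \<in> carrier_mat (2 ^ (p + k)) (2 ^ (p + k))"
    and \<phi>: "\<phi> \<in> carrier_mat (2 ^ k) (2 ^ k)"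
  shows "ptrace_weighted (p + k) k \<phi> (A - B) = ptrace_weighted (p + k) k \<phi> A - ptrace_weighted (p + k) k \<phi> B"
proof (rule eq_matI)
  fix a a'
  assume "a < dim_row (ptrace_weighted (p + k) k \<phi> A - ptrace_weighted (p + k) k \<phi> B)"
    "a' < dim_col (ptrace_weighted (p + k) k \<phi> A - ptrace_weighted (p + k) k \<phi> B)"
  then have a: "a < 2 ^ p" "a' < 2 ^ p" by simp_all
  have "(A - B) $$ (a * 2 ^ k + c, a' * 2 ^ k + b) = A $$ (a * 2 ^ k + c, a' * 2 ^ k + b) - B $$ (a * 2 ^ k + c, a' * 2 ^ k + b)"
    if "b < 2 ^ k" "c < 2 ^ k" for b c
    using A B block_index_less[OF a(1) that(2)] block_index_less[OF a(2) that(1)] by (simp add: power_add)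
  then show "ptrace_weighted (p + k) k \<phi> (A - B) $$ (a, a') =
      (ptrace_weighted (p + k) k \<phi> A - ptrace_weighted (p + k) k \<phi> B) $$ (a, a')"
    using A B \<phi> a
    by (simp add: ptrace_weighted_index[OF minus_carrier_mat[OF B]] ptrace_weighted_index
        sum_subtractf[symmetric] right_diff_distrib)
qed simp_all

definition pauli_expect :: "complex mat \<Rightarrow> nat list \<Rightarrow> complex" where
  "pauli_expect \<phi> \<rho> = (\<Sum>b<2 ^ length \<rho>. \<Sum>c<2 ^ length \<rho>. \<phi> $$ (b, c) * pauli_op \<rho> $$ (c, b))"

lemma ptrace_weighted_pauli_op_index:
  assumes \<phi>: "\<phi> \<in> carrier_mat (2 ^ k) (2 ^ k)" and \<tau>: "\<tau> \<in> pauli_strings p" and \<rho>: "\<rho> \<in> pauli_strings k"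
    and a: "a < 2 ^ p" "a' < 2 ^ p"
  shows "ptrace_weighted (p + k) k \<phi> (pauli_op (\<tau> @ \<rho>)) $$ (a, a') = pauli_expect \<phi> \<rho> * pauli_op \<tau> $$ (a, a')"
proof -
  have len: "length \<tau> = p" "length \<rho> = k"
    using \<tau> \<rho> by (simp_all add: pauli_strings_def)
  have "pauli_op (\<tau> @ \<rho>) $$ (a * 2 ^ k + c, a' * 2 ^ k + b) = pauli_op \<tau> $$ (a, a') * pauli_op \<rho> $$ (c, b)"
    if "b < 2 ^ k" "c < 2 ^ k" for b c
    using pauli_op_append_index[of "a * 2 ^ k + c" \<tau> \<rho> "a' * 2 ^ k + b"] that len
      block_index_less[OF a(1) that(2)] block_index_less[OF a(2) that(1)]
    by (simp add: power_add)
  then have "ptrace_weighted (p + k) k \<phi> (pauli_op (\<tau> @ \<rho>)) $$ (a, a') =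
      (\<Sum>b<2 ^ k. \<Sum>c<2 ^ k. \<phi> $$ (b, c) * pauli_op \<rho> $$ (c, b) * pauli_op \<tau> $$ (a, a'))"
    using pauli_op_carrier[of "\<tau> @ \<rho>"] \<phi> a len
    by (simp add: ptrace_weighted_index mult_ac)
  then show ?thesis
    using len by (simp add: pauli_expect_def sum_distrib_right)
qed

lemma pauli_expansion_ptrace_weighted:
  assumes B: "pauli_expansion (p + k) B c" and \<phi>: "\<phi> \<in> carrier_mat (2 ^ k) (2 ^ k)"
  shows "pauli_expansion p (ptrace_weighted (p + k) k \<phi> B)
    (\<lambda>\<tau>. \<Sum>\<rho>\<in>pauli_strings k. c (\<tau> @ \<rho>) * pauli_expect \<phi> \<rho>)"
proof -
  let ?S = "pauli_strings (p + k)"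
  have "ptrace_weighted (p + k) k \<phi> B $$ (a, a') =
      (\<Sum>\<tau>\<in>pauli_strings p. (\<Sum>\<rho>\<in>pauli_strings k. c (\<tau> @ \<rho>) * pauli_expect \<phi> \<rho>) * pauli_op \<tau> $$ (a, a'))"
    if a: "a < 2 ^ p" "a' < 2 ^ p" for a a'
  proof -
    have "ptrace_weighted (p + k) k \<phi> B $$ (a, a') =
        (\<Sum>b<2 ^ k. \<Sum>d<2 ^ k. \<phi> $$ (b, d) * (\<Sum>\<sigma>\<in>?S. c \<sigma> * pauli_op \<sigma> $$ (a * 2 ^ k + d, a' * 2 ^ k + b)))"
      using pauli_expansion_carrier[OF B] \<phi> a block_index_less[OF a(1)] block_index_less[OF a(2)]
      by (simp add: ptrace_weighted_index pauli_expansion_index[OF B] power_add)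
    also have "\<dots> = (\<Sum>\<sigma>\<in>?S. c \<sigma> * (\<Sum>b<2 ^ k. \<Sum>d<2 ^ k. \<phi> $$ (b, d) * pauli_op \<sigma> $$ (a * 2 ^ k + d, a' * 2 ^ k + b)))"
      by (simp add: sum_distrib_left sum.swap[of _ "{..<2 ^ k}" ?S] mult.left_commute)
    also have "\<dots> = (\<Sum>\<sigma>\<in>?S. c \<sigma> * ptrace_weighted (p + k) k \<phi> (pauli_op \<sigma>) $$ (a, a'))"
    proof (intro sum.cong refl)
      fix \<sigma> assume "\<sigma> \<in> ?S"
      then have "pauli_op \<sigma> \<in> carrier_mat (2 ^ (p + k)) (2 ^ (p + k))"
        using pauli_op_carrier[of \<sigma>] by (simp add: pauli_strings_def)
      then show "c \<sigma> * (\<Sum>b<2 ^ k. \<Sum>d<2 ^ k. \<phi> $$ (b, d) * pauli_op \<sigma> $$ (a * 2 ^ k + d, a' * 2 ^ k + b)) =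
          c \<sigma> * ptrace_weighted (p + k) k \<phi> (pauli_op \<sigma>) $$ (a, a')"
        by (simp add: ptrace_weighted_index[OF _ \<phi> a])
    qed
    also have "\<dots> = (\<Sum>\<tau>\<in>pauli_strings p. \<Sum>\<rho>\<in>pauli_strings k. c (\<tau> @ \<rho>) * (pauli_expect \<phi> \<rho> * pauli_op \<tau> $$ (a, a')))"
      unfolding sum_pauli_strings_add using \<phi> a by (simp add: ptrace_weighted_pauli_op_index)
    finally show ?thesis
      by (simp add: sum_distrib_right mult.assoc)
  qed
  then show ?thesis
    unfolding pauli_expansion_def by (intro eq_matI) simp_all
qed

lemma pauli_deg_ptrace_weighted_le:
  assumes B: "B \<in> carrier_mat (2 ^ (p + k)) (2 ^ (p + k))" and \<phi>: "\<phi> \<in> carrier_mat (2 ^ k) (2 ^ k)"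
  shows "pauli_deg p (ptrace_weighted (p + k) k \<phi> B) \<le> pauli_deg (p + k) B"
proof -
  obtain c where c: "pauli_expansion (p + k) B c"
    and wt: "\<And>\<sigma>. \<sigma> \<in> pauli_strings (p + k) \<Longrightarrow> c \<sigma> \<noteq> 0 \<Longrightarrow> weight \<sigma> \<le> pauli_deg (p + k) B"
    using pauli_deg_attained[OF B] by blast
  show ?thesis
  proof (rule pauli_deg_le[OF pauli_expansion_ptrace_weighted[OF c \<phi>]])
    fix \<tau> assume \<tau>: "\<tau> \<in> pauli_strings p"
      and "(\<Sum>\<rho>\<in>pauli_strings k. c (\<tau> @ \<rho>) * pauli_expect \<phi> \<rho>) \<noteq> 0"
    then obtain \<rho> where \<rho>: "\<rho> \<in> pauli_strings k" "c (\<tau> @ \<rho>) \<noteq> 0"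
      by (metis (no_types, lifting) mult_eq_0_iff sum.neutral)
    have "\<tau> @ \<rho> \<in> pauli_strings (p + k)"
      using \<tau> \<rho>(1) by (auto simp: pauli_strings_def)
    then have "weight (\<tau> @ \<rho>) \<le> pauli_deg (p + k) B"
      using wt \<rho>(2) by blast
    then show "weight \<tau> \<le> pauli_deg (p + k) B"
      by (simp add: weight_def)
  qed
qed

section \<open>Euclidean and spectral norms\<close>

lemma vnorm_eq_L2_set: "vnorm v = L2_set (\<lambda>i. cmod (v $ i)) {..<dim_vec v}"
  by (simp add: vnorm_def L2_set_def)

lemma vnorm_zero_vec [simp]: "vnorm (0\<^sub>v n) = 0"
  by (simp add: vnorm_def)

lemma vnorm_nonneg: "0 \<le> vnorm v"
  by (simp add: vnorm_eq_L2_set)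

lemma vnorm_smult: "vnorm (c \<cdot>\<^sub>v v) = cmod c * vnorm v"
  unfolding vnorm_eq_L2_set by (subst L2_set_right_distrib) (auto intro!: L2_set_cong simp: norm_mult)

lemma vnorm_index_le: "j < dim_vec v \<Longrightarrow> cmod (v $ j) \<le> vnorm v"
  unfolding vnorm_eq_L2_set by (rule member_le_L2_set) auto

lemma mult_mat_vec_index:
  assumes "A \<in> carrier_mat R C" "v \<in> carrier_vec C" "i < R"
  shows "(A *\<^sub>v v) $ i = (\<Sum>j<C. A $$ (i, j) * v $ j)"
  using assms by (simp add: scalar_prod_def lessThan_atLeast0)

lemma spec_norm_set_bdd_above:
  assumes A: "A \<in> carrier_mat R C"
  shows "bdd_above {vnorm (A *\<^sub>v v) | v. v \<in> carrier_vec (dim_col A) \<and> vnorm v \<le> 1}"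
proof (rule bdd_aboveI)
  fix x assume "x \<in> {vnorm (A *\<^sub>v v) | v. v \<in> carrier_vec (dim_col A) \<and> vnorm v \<le> 1}"
  then obtain v where v: "v \<in> carrier_vec C" "vnorm v \<le> 1" and x: "x = vnorm (A *\<^sub>v v)"
    using A by auto
  have "cmod ((A *\<^sub>v v) $ i) \<le> (\<Sum>j<C. cmod (A $$ (i, j)))" if "i < R" for i
  proof -
    have "cmod ((A *\<^sub>v v) $ i) \<le> (\<Sum>j<C. cmod (A $$ (i, j)) * cmod (v $ j))"
      unfolding mult_mat_vec_index[OF A v(1) that] norm_mult[symmetric] by (rule norm_sum)
    also have "\<dots> \<le> (\<Sum>j<C. cmod (A $$ (i, j)))"
    proof (rule sum_mono)
      fix j assume "j \<in> {..<C}"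
      then have "cmod (v $ j) \<le> 1"
        using v vnorm_index_le[of j v] by auto
      then show "cmod (A $$ (i, j)) * cmod (v $ j) \<le> cmod (A $$ (i, j))"
        by (simp add: mult_left_le)
    qed
    finally show ?thesis .
  qed
  moreover have dim: "dim_vec (A *\<^sub>v v) = R"
    using A by simp
  ultimately show "x \<le> L2_set (\<lambda>i. \<Sum>j<C. cmod (A $$ (i, j))) {..<R}"
    unfolding x vnorm_eq_L2_set dim by (intro L2_set_mono) auto
qed

lemma spec_norm_ge:
  assumes "A \<in> carrier_mat R C" "v \<in> carrier_vec C" "vnorm v \<le> 1"
  shows "vnorm (A *\<^sub>v v) \<le> spec_norm A"
  unfolding spec_norm_def by (rule cSup_upper[OF _ spec_norm_set_bdd_above[OF assms(1)]]) (use assms in auto)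

lemma spec_norm_le:
  assumes "A \<in> carrier_mat R C" "\<And>v. v \<in> carrier_vec C \<Longrightarrow> vnorm v \<le> 1 \<Longrightarrow> vnorm (A *\<^sub>v v) \<le> s"
  shows "spec_norm A \<le> s"
  unfolding spec_norm_def
proof (rule cSup_least)
  have "0\<^sub>v C \<in> carrier_vec (dim_col A) \<and> vnorm (0\<^sub>v C) \<le> 1"
    using assms(1) by simp
  then show "{vnorm (A *\<^sub>v v) | v. v \<in> carrier_vec (dim_col A) \<and> vnorm v \<le> 1} \<noteq> {}"
    by blast
qed (use assms in auto)

lemma spec_norm_nonneg:
  assumes "A \<in> carrier_mat R C"
  shows "0 \<le> spec_norm A"
proof -
  have "vnorm (A *\<^sub>v 0\<^sub>v C) = 0"
    using assms by (simp add: vnorm_def mult_mat_vec_index)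
  then show ?thesis
    using spec_norm_ge[OF assms, of "0\<^sub>v C"] by simp
qed

lemma spec_norm_zero_mat: "spec_norm (0\<^sub>m R C) = 0"
proof (rule antisym)
  show "spec_norm (0\<^sub>m R C) \<le> 0"
    by (rule spec_norm_le[of _ R C]) (simp_all add: vnorm_def mult_mat_vec_index)
qed (rule spec_norm_nonneg[of _ R C], simp)

lemma spec_norm_mult_vec_le:
  assumes A: "A \<in> carrier_mat R C" and w: "w \<in> carrier_vec C"
  shows "vnorm (A *\<^sub>v w) \<le> spec_norm A * vnorm w"
proof (cases "vnorm w = 0")
  case True
  then have "w $ j = 0" if "j < C" for j
    using w that vnorm_index_le[of j w] by simp
  then have "(A *\<^sub>v w) $ i = 0" if "i < R" for i
    unfolding mult_mat_vec_index[OF A w that] by simp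
  then have "vnorm (A *\<^sub>v w) = 0"
    using A by (simp add: vnorm_def)
  then show ?thesis using True by simp
next
  case False
  then have pos: "0 < vnorm w"
    using vnorm_nonneg[of w] by linarith
  have "vnorm (A *\<^sub>v w) / vnorm w = vnorm (A *\<^sub>v (complex_of_real (1 / vnorm w) \<cdot>\<^sub>v w))"
    unfolding mult_mat_vec[OF A w] vnorm_smult using pos by (simp add: norm_divide)
  also have "\<dots> \<le> spec_norm A"
    using A w pos by (intro spec_norm_ge[of _ R C]) (simp_all add: vnorm_smult norm_divide)
  finally show ?thesis
    using pos by (simp add: divide_le_eq mult.commute)
qed

lemma L2_set_sum_le:
  assumes "finite T"
  shows "L2_set (\<lambda>a. \<Sum>t\<in>T. g t a) A \<le> (\<Sum>t\<in>T. L2_set (g t) A)"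
  using assms
proof (induction T rule: finite_induct)
  case empty
  then show ?case by (simp add: L2_set_def)
next
  case (insert t T)
  have "L2_set (\<lambda>a. \<Sum>s\<in>insert t T. g s a) A = L2_set (\<lambda>a. g t a + (\<Sum>s\<in>T. g s a)) A"
    using insert.hyps by simp
  also have "\<dots> \<le> L2_set (g t) A + L2_set (\<lambda>a. \<Sum>s\<in>T. g s a) A"
    by (rule L2_set_triangle_ineq)
  also have "\<dots> \<le> L2_set (g t) A + (\<Sum>s\<in>T. L2_set (g s) A)"
    using insert.IH by simp
  finally show ?case
    using insert.hyps by simp
qed

lemma L2_set_lessThan_mult_blocks:
  fixes N K :: nat
  shows "L2_set (\<lambda>a. L2_set (\<lambda>c. h (a * K + c)) {..<K}) {..<N} = L2_set h {..<N * K}"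
proof -
  have "(\<Sum>a<N. (L2_set (\<lambda>c. h (a * K + c)) {..<K})\<^sup>2) = (\<Sum>a<N. \<Sum>c<K. (h (a * K + c))\<^sup>2)"
    unfolding L2_set_def by (intro sum.cong refl) (simp add: sum_nonneg)
  also have "\<dots> = (\<Sum>l<N * K. (h l)\<^sup>2)"
    by (rule sum_lessThan_mult_blocks[symmetric])
  finally show ?thesis
    unfolding L2_set_def[of _ "{..<N}"] L2_set_def[of _ "{..<N * K}"] by simp
qed

lemma L2_set_block_inner_le:
  fixes N K :: nat and r v :: "nat \<Rightarrow> complex"
  shows "L2_set (\<lambda>a. cmod (\<Sum>c<K. cnj (r c) * v (a * K + c))) {..<N}
    \<le> L2_set (\<lambda>c. cmod (r c)) {..<K} * L2_set (\<lambda>l. cmod (v l)) {..<N * K}"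
proof -
  let ?r = "L2_set (\<lambda>c. cmod (r c)) {..<K}"
  have "cmod (\<Sum>c<K. cnj (r c) * v (a * K + c)) \<le> ?r * L2_set (\<lambda>c. cmod (v (a * K + c))) {..<K}" for a
  proof -
    have "cmod (\<Sum>c<K. cnj (r c) * v (a * K + c)) \<le> (\<Sum>c<K. \<bar>cmod (r c)\<bar> * \<bar>cmod (v (a * K + c))\<bar>)"
      by (rule order_trans[OF norm_sum]) (simp add: norm_mult)
    also have "\<dots> \<le> ?r * L2_set (\<lambda>c. cmod (v (a * K + c))) {..<K}"
      by (rule L2_set_mult_ineq)
    finally show ?thesis .
  qed
  then have "L2_set (\<lambda>a. cmod (\<Sum>c<K. cnj (r c) * v (a * K + c))) {..<N}
      \<le> L2_set (\<lambda>a. ?r * L2_set (\<lambda>c. cmod (v (a * K + c))) {..<K}) {..<N}"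
    by (intro L2_set_mono) auto
  also have "\<dots> = ?r * L2_set (\<lambda>l. cmod (v l)) {..<N * K}"
    by (simp add: L2_set_right_distrib[symmetric] L2_set_lessThan_mult_blocks[where h = "\<lambda>l. cmod (v l)"])
  finally show ?thesis .
qed

definition vec_kron :: "complex vec \<Rightarrow> complex vec \<Rightarrow> complex vec" where
  "vec_kron u r = vec (dim_vec u * dim_vec r) (\<lambda>l. u $ (l div dim_vec r) * r $ (l mod dim_vec r))"

lemma vec_kron_carrier: "vec_kron u r \<in> carrier_vec (dim_vec u * dim_vec r)"
  by (simp add: vec_kron_def)

lemma vec_kron_index:
  assumes "a < dim_vec u" "c < dim_vec r"
  shows "vec_kron u r $ (a * dim_vec r + c) = u $ a * r $ c"
proof -
  have div_mod: "(a * K + c) div K = a" "(a * K + c) mod K = c" if "c < K" for K :: nat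
    using that by simp_all
  have "vec_kron u r $ (a * dim_vec r + c) =
      u $ ((a * dim_vec r + c) div dim_vec r) * r $ ((a * dim_vec r + c) mod dim_vec r)"
    using assms by (simp add: vec_kron_def block_index_less)
  then show ?thesis
    unfolding div_mod[OF assms(2)] .
qed

lemma vnorm_vec_kron: "vnorm (vec_kron u r) = vnorm u * vnorm r"
proof -
  let ?N = "dim_vec u" and ?K = "dim_vec r"
  have "vnorm (vec_kron u r) = L2_set (\<lambda>l. cmod (vec_kron u r $ l)) {..<?N * ?K}"
    unfolding vnorm_eq_L2_set by (simp add: vec_kron_def)
  also have "\<dots> = L2_set (\<lambda>a. L2_set (\<lambda>c. cmod (vec_kron u r $ (a * ?K + c))) {..<?K}) {..<?N}"
    by (rule L2_set_lessThan_mult_blocks[symmetric])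
  also have "\<dots> = L2_set (\<lambda>a. L2_set (\<lambda>c. cmod (u $ a) * cmod (r $ c)) {..<?K}) {..<?N}"
    by (intro L2_set_cong refl) (simp add: vec_kron_index norm_mult)
  also have "\<dots> = L2_set (\<lambda>a. cmod (u $ a) * vnorm r) {..<?N}"
    unfolding vnorm_eq_L2_set by (simp add: L2_set_right_distrib)
  also have "\<dots> = vnorm u * vnorm r"
    unfolding vnorm_eq_L2_set[of u] by (simp add: L2_set_left_distrib[OF vnorm_nonneg, symmetric])
  finally show ?thesis .
qed

section \<open>Rank-one decomposition of positive semidefinite forms\<close>

definition quad_form :: "nat \<Rightarrow> (nat \<Rightarrow> nat \<Rightarrow> complex) \<Rightarrow> (nat \<Rightarrow> complex) \<Rightarrow> complex" where
  "quad_form K f v = (\<Sum>i<K. \<Sum>j<K. cnj (v i) * f i j * v j)"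

definition herm_form :: "nat \<Rightarrow> (nat \<Rightarrow> nat \<Rightarrow> complex) \<Rightarrow> bool" where
  "herm_form K f \<longleftrightarrow> (\<forall>i<K. \<forall>j<K. f i j = cnj (f j i))"

definition psd_form :: "nat \<Rightarrow> (nat \<Rightarrow> nat \<Rightarrow> complex) \<Rightarrow> bool" where
  "psd_form K f \<longleftrightarrow> (\<forall>v. 0 \<le> Re (quad_form K f v))"

lemma quad_form_support:
  assumes "S \<subseteq> {..<K}" "\<And>l. l \<notin> S \<Longrightarrow> v l = 0"
  shows "quad_form K f v = (\<Sum>i\<in>S. \<Sum>j\<in>S. cnj (v i) * f i j * v j)"
proof -
  have "quad_form K f v = (\<Sum>i<K. \<Sum>j\<in>S. cnj (v i) * f i j * v j)"
    unfolding quad_form_def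
    by (rule sum.cong[OF refl], rule sum.mono_neutral_right) (use assms in auto)
  also have "\<dots> = (\<Sum>i\<in>S. \<Sum>j\<in>S. cnj (v i) * f i j * v j)"
    by (rule sum.mono_neutral_right) (use assms in auto)
  finally show ?thesis .
qed

lemma quad_form_one_point: "p < K \<Longrightarrow> quad_form K f (\<lambda>l. if l = p then 1 else 0) = f p p"
  using quad_form_support[of "{p}" K "\<lambda>l. if l = p then 1 else 0" f] by simp

lemma quad_form_two_point:
  assumes "i < K" "p < K" "i \<noteq> p"
  shows "quad_form K f (\<lambda>l. if l = i then 1 else if l = p then y else 0) =
    f i i + f i p * y + cnj y * f p i + cnj y * f p p * y"
  using quad_form_support[of "{i, p}" K "\<lambda>l. if l = i then 1 else if l = p then y else 0" f] assms
  by simp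

lemma psd_form_diag_zero:
  assumes h: "herm_form K f" and psd: "psd_form K f" and i: "i < K" and p: "p < K" and fpp: "f p p = 0"
  shows "f i p = 0"
proof (rule ccontr)
  assume nz: "f i p \<noteq> 0"
  then have ip: "i \<noteq> p"
    using fpp by auto
  define x where "x = f i p"
  have fpi: "f p i = cnj x"
    using h[unfolded herm_form_def, rule_format, OF p i] x_def by simp
  have x2: "0 < (cmod x)\<^sup>2"
    using nz x_def by simp
  define t where "t = (\<bar>Re (f i i)\<bar> + 1) / (2 * (cmod x)\<^sup>2)"
  define y where "y = - complex_of_real t * cnj x"
  have "x * cnj x = complex_of_real ((cmod x)\<^sup>2)"
    by (metis complex_norm_square of_real_power)
  then have xy: "x * y = - complex_of_real (t * (cmod x)\<^sup>2)"
    unfolding y_def by (simp add: algebra_simps)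
  have "cnj y * cnj x = cnj (x * y)"
    by (simp only: complex_cnj_mult mult.commute)
  then have "quad_form K f (\<lambda>l. if l = i then 1 else if l = p then y else 0) = f i i + x * y + cnj (x * y)"
    unfolding quad_form_two_point[OF i p ip] fpp fpi x_def[symmetric] by simp
  moreover have "Re (f i i + x * y + cnj (x * y)) = Re (f i i) - (\<bar>Re (f i i)\<bar> + 1)"
    unfolding xy t_def using x2 by simp
  ultimately have "Re (quad_form K f (\<lambda>l. if l = i then 1 else if l = p then y else 0)) =
      Re (f i i) - (\<bar>Re (f i i)\<bar> + 1)"
    by simp
  then have "Re (quad_form K f (\<lambda>l. if l = i then 1 else if l = p then y else 0)) < 0"
    by linarith
  then show False
    using psd unfolding psd_form_def by (meson not_le)
qed

definition schur_compl :: "(nat \<Rightarrow> nat \<Rightarrow> complex) \<Rightarrow> nat \<Rightarrow> nat \<Rightarrow> nat \<Rightarrow> complex" where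
  "schur_compl f p i j = f i j - f i p * f p j / f p p"

lemma schur_compl_pivot_row_col [simp]:
  assumes "f p p \<noteq> 0"
  shows "schur_compl f p i p = 0" "schur_compl f p p j = 0"
  using assms by (simp_all add: schur_compl_def)

lemma herm_form_schur_compl:
  assumes h: "herm_form K f" and p: "p < K"
  shows "herm_form K (schur_compl f p)"
  unfolding herm_form_def
proof (intro allI impI)
  fix i j assume ij: "i < K" "j < K"
  have cnj_f: "cnj (f a b) = f b a" if "a < K" "b < K" for a b
    using h[unfolded herm_form_def, rule_format, OF that] by simp
  show "schur_compl f p i j = cnj (schur_compl f p j i)"
    using cnj_f[OF ij(2) ij(1)] cnj_f[OF ij(2) p] cnj_f[OF p ij(1)] cnj_f[OF p p]
    by (simp add: schur_compl_def mult.commute)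
qed

lemma quad_form_schur_compl:
  "quad_form K (schur_compl f p) w =
    quad_form K f w - (\<Sum>i<K. cnj (w i) * f i p) * (\<Sum>j<K. f p j * w j) / f p p"
proof -
  have "quad_form K (schur_compl f p) w =
      (\<Sum>i<K. \<Sum>j<K. cnj (w i) * f i j * w j - cnj (w i) * f i p * (f p j * w j) / f p p)"
    unfolding quad_form_def schur_compl_def by (intro sum.cong refl) (simp add: algebra_simps)
  also have "\<dots> = quad_form K f w - (\<Sum>i<K. \<Sum>j<K. cnj (w i) * f i p * (f p j * w j)) / f p p"
    unfolding quad_form_def by (simp add: sum_subtractf sum_divide_distrib)
  finally show ?thesis
    by (simp add: sum_product)
qed

lemma psd_form_schur_compl:
  assumes psd: "psd_form K f" and p: "p < K" and fpp: "f p p \<noteq> 0"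
  shows "psd_form K (schur_compl f p)"
  unfolding psd_form_def
proof
  fix v
  define w where "w = v(p := v p - (\<Sum>j<K. f p j * v j) / f p p)"
  have "(\<Sum>j<K. f p j * w j) = (\<Sum>j<K. f p j * v j + (if j = p then - f p p * ((\<Sum>j<K. f p j * v j) / f p p) else 0))"
    unfolding w_def by (intro sum.cong refl) (auto simp: algebra_simps)
  also have "\<dots> = 0"
    using p fpp by (simp add: sum.distrib)
  finally have w_orth: "(\<Sum>j<K. f p j * w j) = 0" .
  have "quad_form K (schur_compl f p) v = quad_form K (schur_compl f p) w"
    unfolding quad_form_def using fpp by (intro sum.cong refl) (auto simp: w_def)
  also have "\<dots> = quad_form K f w"
    by (simp add: quad_form_schur_compl w_orth)
  finally show "0 \<le> Re (quad_form K (schur_compl f p) v)"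
    using psd unfolding psd_form_def by simp
qed

(* Induction on the support: a zero pivot forces its row to vanish; otherwise the Schur
   complement at the pivot is Hermitian, positive semidefinite and supported on S. *)
lemma psd_form_rank_one_sum_on:
  assumes "finite S" "S \<subseteq> {..<K}" "herm_form K f" "psd_form K f"
    and "\<And>i j. i < K \<Longrightarrow> j < K \<Longrightarrow> i \<notin> S \<or> j \<notin> S \<Longrightarrow> f i j = 0"
  shows "\<exists>(m::nat) R. \<forall>i<K. \<forall>j<K. f i j = (\<Sum>t<m. R t i * cnj (R t j))"
  using assms
proof (induction S arbitrary: f rule: finite_induct)
  case empty
  then have "\<forall>i<K. \<forall>j<K. f i j = (\<Sum>t<(0::nat). R t i * cnj (R t j))" for R
    by simp
  then show ?case by blast
next
  case (insert p S)
  have p: "p < K" and S: "S \<subseteq> {..<K}"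
    using insert.prems(1) by auto
  have cnj_f: "cnj (f a b) = f b a" if "a < K" "b < K" for a b
    using insert.prems(2)[unfolded herm_form_def, rule_format, OF that] by simp
  show ?case
  proof (cases "f p p = 0")
    case True
    have "f i p = 0" "f p i = 0" if "i < K" for i
      using psd_form_diag_zero[OF insert.prems(2,3) that p True] cnj_f[OF that p] by auto
    then have "f i j = 0" if "i < K" "j < K" "i \<notin> S \<or> j \<notin> S" for i j
      using insert.prems(4)[OF that(1,2)] that by (cases "i = p"; cases "j = p") auto
    then show ?thesis
      using insert.IH[OF S insert.prems(2,3)] by blast
  next
    case False
    define d where "d = Re (f p p)"
    have fpp: "f p p = complex_of_real d"
      using cnj_f[OF p p] unfolding d_def by (metis Reals_cnj_iff complex_is_Real_iff of_real_Re)
    have "0 \<le> d"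
      using insert.prems(3) quad_form_one_point[OF p, of f] unfolding psd_form_def d_def by metis
    then have d: "0 < d"
      using False fpp by fastforce
    define r where "r i = f i p / complex_of_real (sqrt d)" for i
    have rank_one: "r i * cnj (r j) = f i p * f p j / f p p" if "j < K" for i j
      using d cnj_f[OF that p] unfolding r_def fpp
      by (simp add: of_real_mult[symmetric] del: of_real_mult)
    have "schur_compl f p i j = 0" if "i < K" "j < K" "i \<notin> S \<or> j \<notin> S" for i j
    proof (cases "i = p \<or> j = p")
      case True
      then show ?thesis using False by auto
    next
      case False
      then have "i \<notin> insert p S \<or> j \<notin> insert p S"
        using that(3) by auto
      then have "f i j = 0" "f i p = 0 \<or> f p j = 0"
        using insert.prems(4) that(1,2) p by auto
      then show ?thesis
        unfolding schur_compl_def by auto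
    qed
    then obtain m R where R: "\<forall>i<K. \<forall>j<K. schur_compl f p i j = (\<Sum>t<(m::nat). R t i * cnj (R t j))"
      using insert.IH[OF S herm_form_schur_compl[OF insert.prems(2) p]
          psd_form_schur_compl[OF insert.prems(3) p False]] by blast
    have "f i j = (\<Sum>t<Suc m. (R(m := r)) t i * cnj ((R(m := r)) t j))" if "i < K" "j < K" for i j
    proof -
      have "f i j - f i p * f p j / f p p = (\<Sum>t<m. R t i * cnj (R t j))"
        using R that unfolding schur_compl_def by blast
      moreover have "(\<Sum>t<m. (R(m := r)) t i * cnj ((R(m := r)) t j)) = (\<Sum>t<m. R t i * cnj (R t j))"
        by (intro sum.cong refl) simp
      ultimately show ?thesis
        using rank_one[OF that(2)] by (simp add: diff_eq_eq)
    qed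
    then show ?thesis by blast
  qed
qed

lemma psd_form_rank_one_sum:
  assumes "herm_form K f" "psd_form K f"
  shows "\<exists>(m::nat) R. \<forall>i<K. \<forall>j<K. f i j = (\<Sum>t<m. R t i * cnj (R t j))"
  using psd_form_rank_one_sum_on[of "{..<K}" K f] assms by auto

lemma density_op_rank_one_sum:
  assumes \<phi>: "density_op k \<phi>"
  shows "\<exists>R (m::nat). (\<forall>t. R t \<in> carrier_vec (2 ^ k)) \<and>
    (\<forall>b<2 ^ k. \<forall>c<2 ^ k. \<phi> $$ (b, c) = (\<Sum>t<m. R t $ b * cnj (R t $ c))) \<and>
    (\<Sum>t<m. (vnorm (R t))\<^sup>2) = 1"
proof -
  let ?K = "2 ^ k :: nat" and ?f = "\<lambda>i j. \<phi> $$ (i, j)"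
  have carrier: "\<phi> \<in> carrier_mat ?K ?K" and herm: "hermitian \<phi>"
    and psd: "\<forall>v \<in> carrier_vec ?K. 0 \<le> Re (\<Sum>i<?K. cnj (v $ i) * (\<phi> *\<^sub>v v) $ i)"
    and trace: "(\<Sum>i<?K. \<phi> $$ (i, i)) = 1"
    using \<phi> unfolding density_op_def by auto
  have "herm_form ?K ?f"
    unfolding herm_form_def
  proof (intro allI impI)
    fix i j assume "i < ?K" "j < ?K"
    then show "\<phi> $$ (i, j) = cnj (\<phi> $$ (j, i))"
      using herm carrier unfolding hermitian_def by (metis carrier_matD(1,2))
  qed
  moreover have "psd_form ?K ?f"
    unfolding psd_form_def
  proof
    fix v :: "nat \<Rightarrow> complex"
    have "(\<Sum>i<?K. cnj (vec ?K v $ i) * (\<phi> *\<^sub>v vec ?K v) $ i) = quad_form ?K ?f v"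
      unfolding quad_form_def
    proof (intro sum.cong refl)
      fix i assume "i \<in> {..<?K}"
      then have "(\<phi> *\<^sub>v vec ?K v) $ i = (\<Sum>j<?K. \<phi> $$ (i, j) * v j)"
        by (subst mult_mat_vec_index[OF carrier vec_carrier]) auto
      then show "cnj (vec ?K v $ i) * (\<phi> *\<^sub>v vec ?K v) $ i = (\<Sum>j<?K. cnj (v i) * \<phi> $$ (i, j) * v j)"
        using \<open>i \<in> {..<?K}\<close> by (simp add: sum_distrib_left mult.assoc)
    qed
    then show "0 \<le> Re (quad_form ?K ?f v)"
      using psd by (metis vec_carrier)
  qed
  ultimately obtain m R where R: "\<forall>i<?K. \<forall>j<?K. \<phi> $$ (i, j) = (\<Sum>t<(m::nat). R t i * cnj (R t j))"
    using psd_form_rank_one_sum by blast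
  have "complex_of_real (\<Sum>t<m. (vnorm (vec ?K (R t)))\<^sup>2) = (\<Sum>t<m. \<Sum>i<?K. R t i * cnj (R t i))"
    by (simp add: vnorm_def sum_nonneg complex_norm_square flip: of_real_power)
  also have "\<dots> = (\<Sum>i<?K. \<phi> $$ (i, i))"
    using R by (subst sum.swap) simp
  finally have "complex_of_real (\<Sum>t<m. (vnorm (vec ?K (R t)))\<^sup>2) = 1"
    using trace by (rule trans)
  then have "(\<Sum>t<m. (vnorm (vec ?K (R t)))\<^sup>2) = 1"
    by (simp only: of_real_eq_1_iff)
  moreover have "\<phi> $$ (b, c) = (\<Sum>t<m. vec ?K (R t) $ b * cnj (vec ?K (R t) $ c))" if "b < ?K" "c < ?K" for b c
    using R that by simp
  ultimately show ?thesis
    by (intro exI[of _ "\<lambda>t. vec ?K (R t)"] exI[of _ m] conjI allI impI) simp_all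
qed

section \<open>Contraction and approximate degree\<close>

lemma ptrace_weighted_mult_vec_index:
  assumes A: "A \<in> carrier_mat (2 ^ (p + k)) (2 ^ (p + k))" and \<phi>: "\<phi> \<in> carrier_mat (2 ^ k) (2 ^ k)"
    and R: "\<And>t. R t \<in> carrier_vec (2 ^ k)"
    and \<phi>_eq: "\<And>b c. b < 2 ^ k \<Longrightarrow> c < 2 ^ k \<Longrightarrow> \<phi> $$ (b, c) = (\<Sum>t<(m::nat). R t $ b * cnj (R t $ c))"
    and u: "u \<in> carrier_vec (2 ^ p)" and a: "a < 2 ^ p"
  shows "(ptrace_weighted (p + k) k \<phi> A *\<^sub>v u) $ a =
    (\<Sum>t<m. \<Sum>c<2 ^ k. cnj (R t $ c) * (A *\<^sub>v vec_kron u (R t)) $ (a * 2 ^ k + c))"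
proof -
  let ?N = "2 ^ p :: nat" and ?K = "2 ^ k :: nat"
  let ?F = "\<lambda>t a' b c. R t $ b * cnj (R t $ c) * A $$ (a * ?K + c, a' * ?K + b) * u $ a'"
  have A': "A \<in> carrier_mat (?N * ?K) (?N * ?K)"
    using A by (simp add: power_add)
  have dims: "dim_vec u = ?N" "dim_vec (R t) = ?K" for t
    using u R by auto
  have A_kron: "(A *\<^sub>v vec_kron u (R t)) $ (a * ?K + c) = (\<Sum>a'<?N. \<Sum>b<?K. A $$ (a * ?K + c, a' * ?K + b) * (u $ a' * R t $ b))"
    if c: "c < ?K" for t c
  proof -
    have "(A *\<^sub>v vec_kron u (R t)) $ (a * ?K + c) = (\<Sum>l<?N * ?K. A $$ (a * ?K + c, l) * vec_kron u (R t) $ l)"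
      using vec_kron_carrier[of u "R t"] dims by (intro mult_mat_vec_index[OF A'] block_index_less[OF a c]) simp
    also have "\<dots> = (\<Sum>a'<?N. \<Sum>b<?K. A $$ (a * ?K + c, a' * ?K + b) * vec_kron u (R t) $ (a' * ?K + b))"
      by (rule sum_lessThan_mult_blocks)
    also have "\<dots> = (\<Sum>a'<?N. \<Sum>b<?K. A $$ (a * ?K + c, a' * ?K + b) * (u $ a' * R t $ b))"
      using vec_kron_index[of _ u _ "R t"] by (intro sum.cong refl) (simp add: dims)
    finally show ?thesis .
  qed
  have "(ptrace_weighted (p + k) k \<phi> A *\<^sub>v u) $ a = (\<Sum>a'<?N. ptrace_weighted (p + k) k \<phi> A $$ (a, a') * u $ a')"
    using u a by (intro mult_mat_vec_index) (auto intro: carrier_matI)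
  also have "\<dots> = (\<Sum>a'<?N. \<Sum>b<?K. \<Sum>c<?K. \<phi> $$ (b, c) * A $$ (a * ?K + c, a' * ?K + b) * u $ a')"
    by (intro sum.cong refl) (simp add: ptrace_weighted_index[OF A \<phi> a] sum_distrib_right)
  also have "\<dots> = (\<Sum>a'<?N. \<Sum>b<?K. \<Sum>c<?K. \<Sum>t<m. ?F t a' b c)"
    by (intro sum.cong refl) (simp add: \<phi>_eq sum_distrib_right)
  also have "\<dots> = (\<Sum>t<m. \<Sum>c<?K. \<Sum>a'<?N. \<Sum>b<?K. ?F t a' b c)"
    by (simp only: sum.swap[where A = "{..<?N}" and B = "{..<m}"] sum.swap[where A = "{..<?K}" and B = "{..<m}"]
        sum.swap[where A = "{..<?N}" and B = "{..<?K}"]) (rule sum.cong[OF refl], rule sum.swap)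
  also have "\<dots> = (\<Sum>t<m. \<Sum>c<?K. cnj (R t $ c) * (A *\<^sub>v vec_kron u (R t)) $ (a * ?K + c))"
    by (intro sum.cong refl) (simp add: A_kron sum_distrib_left mult_ac)
  finally show ?thesis .
qed

lemma spec_norm_ptrace_weighted_le:
  assumes A: "A \<in> carrier_mat (2 ^ (p + k)) (2 ^ (p + k))" and \<phi>: "density_op k \<phi>"
  shows "spec_norm (ptrace_weighted (p + k) k \<phi> A) \<le> spec_norm A"
proof -
  let ?X = "ptrace_weighted (p + k) k \<phi> A"
  from density_op_rank_one_sum[OF \<phi>] obtain R and m :: nat
    where R: "\<forall>t. R t \<in> carrier_vec (2 ^ k)"
    and \<phi>_eq: "\<forall>b<2 ^ k. \<forall>c<2 ^ k. \<phi> $$ (b, c) = (\<Sum>t<m. R t $ b * cnj (R t $ c))"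
    and R_norms: "(\<Sum>t<m. (vnorm (R t))\<^sup>2) = 1"
    by blast
  have \<phi>_carrier: "\<phi> \<in> carrier_mat (2 ^ k) (2 ^ k)"
    using \<phi> by (simp add: density_op_def)
  have X: "?X \<in> carrier_mat (2 ^ p) (2 ^ p)"
    by (auto intro: carrier_matI)
  show ?thesis
  proof (rule spec_norm_le[OF X])
    fix u assume u: "u \<in> carrier_vec (2 ^ p)" "vnorm u \<le> 1"
    define w where "w t = vec_kron u (R t)" for t
    define y where "y t a = (\<Sum>c<2 ^ k. cnj (R t $ c) * (A *\<^sub>v w t) $ (a * 2 ^ k + c))" for t a
    have w: "w t \<in> carrier_vec (2 ^ (p + k))" for t
      using vec_kron_carrier[of u "R t"] u R[rule_format, of t] unfolding w_def by (simp add: power_add)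
    have "vnorm (?X *\<^sub>v u) = L2_set (\<lambda>a. cmod (\<Sum>t<m. y t a)) {..<2 ^ p}"
      unfolding vnorm_eq_L2_set y_def w_def
      using ptrace_weighted_mult_vec_index[OF A \<phi>_carrier R[rule_format] \<phi>_eq[rule_format] u(1)] by (intro L2_set_cong) auto
    also have "\<dots> \<le> L2_set (\<lambda>a. \<Sum>t<m. cmod (y t a)) {..<2 ^ p}"
      by (intro L2_set_mono norm_sum) auto
    also have "\<dots> \<le> (\<Sum>t<m. L2_set (\<lambda>a. cmod (y t a)) {..<2 ^ p})"
      by (rule L2_set_sum_le) simp
    also have "\<dots> \<le> (\<Sum>t<m. vnorm (R t) * vnorm (A *\<^sub>v w t))"
    proof (rule sum_mono)
      fix t
      have "dim_vec (A *\<^sub>v w t) = 2 ^ p * 2 ^ k" "dim_vec (R t) = 2 ^ k"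
        using A R[rule_format, of t] by (simp_all add: power_add)
      then show "L2_set (\<lambda>a. cmod (y t a)) {..<2 ^ p} \<le> vnorm (R t) * vnorm (A *\<^sub>v w t)"
        unfolding y_def vnorm_eq_L2_set[of "R t"] vnorm_eq_L2_set[of "A *\<^sub>v w t"]
        by (simp add: L2_set_block_inner_le)
    qed
    also have "\<dots> \<le> (\<Sum>t<m. vnorm (R t) * (spec_norm A * vnorm (R t)))"
    proof (rule sum_mono)
      fix t
      have "vnorm (A *\<^sub>v w t) \<le> spec_norm A * (vnorm u * vnorm (R t))"
        using spec_norm_mult_vec_le[OF A w] unfolding w_def vnorm_vec_kron .
      also have "\<dots> \<le> spec_norm A * vnorm (R t)"
        using mult_left_le_one_le[OF vnorm_nonneg vnorm_nonneg u(2)] spec_norm_nonneg[OF A]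
        by (rule mult_left_mono)
      finally show "vnorm (R t) * vnorm (A *\<^sub>v w t) \<le> vnorm (R t) * (spec_norm A * vnorm (R t))"
        by (rule mult_left_mono[OF _ vnorm_nonneg])
    qed
    also have "\<dots> = spec_norm A * (\<Sum>t<m. (vnorm (R t))\<^sup>2)"
      by (simp add: sum_distrib_left power2_eq_square mult_ac)
    also have "\<dots> = spec_norm A"
      using R_norms by simp
    finally show "vnorm (?X *\<^sub>v u) \<le> spec_norm A" .
  qed
qed

lemma approx_deg_attained:
  assumes "A \<in> carrier_mat (2 ^ m) (2 ^ m)" "0 \<le> \<epsilon>"
  obtains B where "B \<in> carrier_mat (2 ^ m) (2 ^ m)" "spec_norm (A - B) \<le> \<epsilon>" "pauli_deg m B = approx_deg m \<epsilon> A"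
proof -
  have "\<exists>B \<in> carrier_mat (2 ^ m) (2 ^ m). spec_norm (A - B) \<le> \<epsilon> \<and> pauli_deg m B = pauli_deg m A"
    using assms by (intro bexI[of _ A]) (simp_all add: spec_norm_zero_mat)
  then have "\<exists>B \<in> carrier_mat (2 ^ m) (2 ^ m). spec_norm (A - B) \<le> \<epsilon> \<and> pauli_deg m B = approx_deg m \<epsilon> A"
    unfolding approx_deg_def by (rule LeastI)
  then show ?thesis
    using that by blast
qed

lemma approx_deg_le:
  assumes "B \<in> carrier_mat (2 ^ m) (2 ^ m)" "spec_norm (A - B) \<le> \<epsilon>"
  shows "approx_deg m \<epsilon> A \<le> pauli_deg m B"
  unfolding approx_deg_def by (rule Least_le) (use assms in blast)

lemma approx_deg_ptrace_weighted_le: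
  assumes M: "M \<in> carrier_mat (2 ^ (p + k)) (2 ^ (p + k))" and \<phi>: "density_op k \<phi>" and "0 \<le> \<epsilon>"
  shows "approx_deg p \<epsilon> (ptrace_weighted (p + k) k \<phi> M) \<le> approx_deg (p + k) \<epsilon> M"
proof -
  have \<phi>_carrier: "\<phi> \<in> carrier_mat (2 ^ k) (2 ^ k)"
    using \<phi> by (simp add: density_op_def)
  obtain B where B: "B \<in> carrier_mat (2 ^ (p + k)) (2 ^ (p + k))" "spec_norm (M - B) \<le> \<epsilon>"
    and deg_B: "pauli_deg (p + k) B = approx_deg (p + k) \<epsilon> M"
    using approx_deg_attained[OF M \<open>0 \<le> \<epsilon>\<close>] by blast
  have "M - B \<in> carrier_mat (2 ^ (p + k)) (2 ^ (p + k))"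
    using B(1) by (rule minus_carrier_mat)
  then have "spec_norm (ptrace_weighted (p + k) k \<phi> M - ptrace_weighted (p + k) k \<phi> B) \<le> \<epsilon>"
    using spec_norm_ptrace_weighted_le[OF _ \<phi>] B(2)
    unfolding ptrace_weighted_diff[OF M B(1) \<phi>_carrier, symmetric] by (meson order_trans)
  then have "approx_deg p \<epsilon> (ptrace_weighted (p + k) k \<phi> M) \<le> pauli_deg p (ptrace_weighted (p + k) k \<phi> B)"
    by (intro approx_deg_le) (auto intro: carrier_matI)
  also have "\<dots> \<le> approx_deg (p + k) \<epsilon> M"
    using pauli_deg_ptrace_weighted_le[OF B(1) \<phi>_carrier] deg_B by simp
  finally show ?thesis .
qed

theorem lemma2p12:
  fixes M \<phi> :: "complex mat" and n k :: nat and \<epsilon> :: real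
  assumes "M \<in> carrier_mat (2^n) (2^n)" and "hermitian M"
    and "k \<le> n" and "density_op k \<phi>"
    and "0 \<le> \<epsilon>" and "\<epsilon> \<le> 1"
  shows "approx_deg (n - k) \<epsilon> (ptrace_last n k (kron (1\<^sub>m (2^(n-k))) \<phi> * M))
         \<le> approx_deg n \<epsilon> M"
proof -
  obtain p where n: "n = p + k"
    using \<open>k \<le> n\<close> by (metis le_add_diff_inverse2)
  show ?thesis
    using approx_deg_ptrace_weighted_le[of M p k \<phi> \<epsilon>] assms(1,4,5)
    unfolding n ptrace_weighted_def by simp
qed

end
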